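(* In the self-confidence game described in the context, every profile $z\in[0,1]^n$ such that (i) $|\mathcal S(z)|=2$, where $\mathcal S(z)=\{i\in\mathcal V: z_i=1\}$, and (ii) $\sigma_j^2\le\sigma_i^2$ for every $j\in\mathcal S(z)$ and every $i\in\mathcal V$, is a Nash equilibrium that is not strict.
   Context: Let $n\ge2$ and $\mathcal V=\{1,\dots,n\}$. Let $P\in\mathbb{R}^{n\times n}$ be a row-stochastic, irreducible, aperiodic matrix (the graph on $\mathcal V$ with edge $(i,j)$ iff $P_{ij}>0$ is strongly connected with gcd of cycle lengths $1$). For $z\in[0,1]^n$, $W(z)=(I-[z])P+[z]$ ($[z]$ the diagonal matrix with diagonal $z$) and $H(z)=\lim_{t\to\infty}W(z)^t$ (the limit exists and is row-stochastic). Let $\sigma_1^2,\dots,\sigma_n^2>0$. Agent $i$'s cost is $\upsilon_i(z)=\sum_jH_{ij}(z)^2\sigma_j^2$; the game has players $\mathcal V$, action sets $[0,1]$, each player minimizing her cost. Nash equilibrium: for all $i$, $\bar z_i\in[0,1]$, $\upsilon_i(z_i,z_{-i})\le\upsilon_i(\bar z_i,z_{-i})$; strict Nash equilibrium: strict inequality whenever $\bar z_i\ne z_i$. *)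

theory Defs
  imports "HOL-Analysis.Analysis"
begin

fun matpow :: "real^'n^'n \<Rightarrow> nat \<Rightarrow> real^'n^'n" where
  "matpow A 0 = mat 1"
| "matpow A (Suc k) = matpow A k ** A"

definition row_stochastic :: "real^'n^'n \<Rightarrow> bool" where
  "row_stochastic P \<longleftrightarrow> (\<forall>i j. P$i$j \<ge> 0) \<and> (\<forall>i. (\<Sum>j\<in>UNIV. P$i$j) = 1)"

definition graph_edges :: "real^'n^'n \<Rightarrow> ('n \<times> 'n) set" where
  "graph_edges P = {(i,j). P$i$j > 0}"

definition irreducible_mat :: "real^'n^'n \<Rightarrow> bool" where
  "irreducible_mat P \<longleftrightarrow> (\<forall>i j. (i,j) \<in> (graph_edges P)\<^sup>+)"

definition aperiodic_mat :: "real^'n^'n \<Rightarrow> bool" where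
  "aperiodic_mat P \<longleftrightarrow>
     Gcd {k::nat. k > 0 \<and> (\<exists>i. (i,i) \<in> graph_edges P ^^ k)} = 1"

definition diagm :: "real^'n \<Rightarrow> real^'n^'n" where
  "diagm z = (\<chi> i j. if i = j then z$i else 0)"

definition Wm :: "real^'n^'n \<Rightarrow> real^'n \<Rightarrow> real^'n^'n" where
  "Wm P z = (mat 1 - diagm z) ** P + diagm z"

definition Hm :: "real^'n^'n \<Rightarrow> real^'n \<Rightarrow> real^'n^'n" where
  "Hm P z = lim (\<lambda>t. matpow (Wm P z) t)"

definition cost :: "real^'n^'n \<Rightarrow> ('n \<Rightarrow> real) \<Rightarrow> 'n \<Rightarrow> real^'n \<Rightarrow> real" where
  "cost P sigma2 i z = (\<Sum>j\<in>UNIV. (Hm P z $ i $ j)^2 * sigma2 j)"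

definition profiles :: "(real^'n) set" where
  "profiles = {z. \<forall>i. 0 \<le> z$i \<and> z$i \<le> 1}"

definition vupd :: "real^'n \<Rightarrow> 'n \<Rightarrow> real \<Rightarrow> real^'n" where
  "vupd z i b = (\<chi> k. if k = i then b else z$k)"

definition nash_eq :: "real^'n^'n \<Rightarrow> ('n \<Rightarrow> real) \<Rightarrow> real^'n \<Rightarrow> bool" where
  "nash_eq P sigma2 z \<longleftrightarrow> z \<in> profiles \<and>
     (\<forall>i. \<forall>b\<in>{0..1}. cost P sigma2 i z \<le> cost P sigma2 i (vupd z i b))"

definition strict_nash_eq :: "real^'n^'n \<Rightarrow> ('n \<Rightarrow> real) \<Rightarrow> real^'n \<Rightarrow> bool" where
  "strict_nash_eq P sigma2 z \<longleftrightarrow> z \<in> profiles \<and>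
     (\<forall>i. \<forall>b\<in>{0..1}. b \<noteq> z$i \<longrightarrow> cost P sigma2 i z < cost P sigma2 i (vupd z i b))"

definition stubborn :: "real^'n \<Rightarrow> 'n set" where
  "stubborn z = {i. z$i = 1}"

end

theory Submission
  imports Defs
begin

(* Once some agent is stubborn (z_i = 1), the columns of W(z)^t indexed by stubborn agents
   increase monotonically, while the mass W(z)^t leaves outside the stubborn set S(z) tends to
   a limit that is P-harmonic off S(z) and vanishes on S(z), hence vanishes everywhere by the
   maximum principle for the irreducible P. So H(z) exists without aperiodicity, is stochastic,
   is supported on the stubborn columns and depends on z only through S(z).

   A stubborn agent i has cost sigma_i^2. If she gives up stubbornness, the other stubborn agent
   w is left alone, the opinions reach consensus on w, and her cost becomes sigma_w^2 =
   sigma_i^2: she is indifferent, so the equilibrium is not strict. A non-stubborn agent either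
   keeps S(z), and with it H(z), or becomes stubborn at cost sigma_i^2, which bounds her current
   cost sum_j H_ij^2 sigma_j^2 <= sum_j H_ij sigma_i^2. *)

lemma matpow_Suc_left: "matpow A (Suc t) = A ** matpow A t"
proof (induction t)
  case (Suc t)
  then show ?case
    by (metis matpow.simps(2) matrix_mul_assoc)
qed simp

lemma matpow_Suc_left_nth:
  "matpow A (Suc t) $ i $ j = (\<Sum>k\<in>UNIV. A $ i $ k * matpow A t $ k $ j)"
  by (simp only: matpow_Suc_left) (simp add: matrix_matrix_mult_def)

lemma row_stochastic_mult:
  assumes "row_stochastic A" "row_stochastic B"
  shows "row_stochastic (A ** B)"
proof -
  have "(\<Sum>j\<in>UNIV. (A ** B) $ i $ j) = 1" for i
  proof -
    have "(\<Sum>j\<in>UNIV. (A ** B) $ i $ j) = (\<Sum>j\<in>UNIV. \<Sum>k\<in>UNIV. A $ i $ k * B $ k $ j)"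
      by (simp add: matrix_matrix_mult_def)
    also have "\<dots> = (\<Sum>k\<in>UNIV. A $ i $ k * (\<Sum>j\<in>UNIV. B $ k $ j))"
      by (subst sum.swap) (simp add: sum_distrib_left)
    finally show ?thesis
      using assms by (simp add: row_stochastic_def)
  qed
  moreover have "(A ** B) $ i $ j \<ge> 0" for i j
    using assms by (simp add: row_stochastic_def matrix_matrix_mult_def sum_nonneg)
  ultimately show ?thesis
    by (simp add: row_stochastic_def)
qed

lemma row_stochastic_mat_1: "row_stochastic (mat 1 :: real^'n^'n)"
  by (simp add: row_stochastic_def mat_def)

lemma row_stochastic_matpow: "row_stochastic W \<Longrightarrow> row_stochastic (matpow W t)"
  by (induction t) (simp_all add: row_stochastic_mat_1 row_stochastic_mult)

lemma row_stochastic_nth_le_1: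
  assumes "row_stochastic W"
  shows "W $ i $ j \<le> 1"
proof -
  have "W $ i $ j \<le> (\<Sum>k\<in>UNIV. W $ i $ k)"
    using assms by (intro member_le_sum) (auto simp: row_stochastic_def)
  then show ?thesis
    using assms by (simp add: row_stochastic_def)
qed

definition absorbing :: "real^'n^'n \<Rightarrow> 'n \<Rightarrow> bool" where
  "absorbing W i \<longleftrightarrow> (\<forall>k. W $ i $ k = (if i = k then 1 else 0))"

lemma absorbing_matpow: "absorbing W i \<Longrightarrow> absorbing (matpow W t) i"
proof (induction t)
  case 0
  then show ?case by (simp add: absorbing_def mat_def)
next
  case (Suc t)
  have "matpow W (Suc t) $ i $ k = (\<Sum>l\<in>UNIV. if l = i then matpow W t $ i $ k else 0)" for k
    unfolding matpow_Suc_left_nth by (rule sum.cong) (use Suc.prems in \<open>auto simp: absorbing_def\<close>)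
  then show ?case
    using Suc by (simp add: absorbing_def)
qed

lemma matpow_absorbing_column_mono:
  assumes nonneg: "\<forall>i k. W $ i $ k \<ge> 0" and j: "absorbing W j"
  shows "matpow W t $ i $ j \<le> matpow W (Suc t) $ i $ j"
proof (induction t arbitrary: i)
  case 0
  have "matpow W (Suc 0) $ i $ j = W $ i $ j"
    by (simp add: matrix_mul_lid)
  then show ?case
    using nonneg j by (auto simp: mat_def absorbing_def)
next
  case (Suc t)
  have "matpow W (Suc t) $ i $ j = (\<Sum>k\<in>UNIV. W $ i $ k * matpow W t $ k $ j)"
    by (rule matpow_Suc_left_nth)
  also have "\<dots> \<le> (\<Sum>k\<in>UNIV. W $ i $ k * matpow W (Suc t) $ k $ j)"
    by (intro sum_mono mult_left_mono Suc.IH nonneg[rule_format])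
  also have "\<dots> = matpow W (Suc (Suc t)) $ i $ j"
    by (rule matpow_Suc_left_nth[symmetric])
  finally show ?case .
qed

lemma matpow_absorbing_column_convergent:
  assumes "row_stochastic W" "absorbing W j"
  shows "convergent (\<lambda>t. matpow W t $ i $ j)"
proof (rule incseq_convergent)
  show "incseq (\<lambda>t. matpow W t $ i $ j)"
    using assms by (intro incseq_SucI matpow_absorbing_column_mono) (auto simp: row_stochastic_def)
  show "\<forall>t. matpow W t $ i $ j \<le> 1"
    using assms by (simp add: row_stochastic_nth_le_1 row_stochastic_matpow)
qed (erule convergentI)

lemma matpow_partial_row_sum_limit_fixed:
  assumes "\<And>i. (\<lambda>t. \<Sum>j\<in>J. matpow W t $ i $ j) \<longlonglongrightarrow> X i"
  shows "X i = (\<Sum>k\<in>UNIV. W $ i $ k * X k)"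
proof -
  have step: "(\<Sum>j\<in>J. matpow W (Suc t) $ i $ j)
      = (\<Sum>k\<in>UNIV. W $ i $ k * (\<Sum>j\<in>J. matpow W t $ k $ j))" for t
    by (simp only: matpow_Suc_left_nth sum_distrib_left) (rule sum.swap)
  have "(\<lambda>t. \<Sum>j\<in>J. matpow W (Suc t) $ i $ j) \<longlonglongrightarrow> X i"
    using assms by (rule LIMSEQ_Suc)
  moreover have "(\<lambda>t. \<Sum>j\<in>J. matpow W (Suc t) $ i $ j) \<longlonglongrightarrow> (\<Sum>k\<in>UNIV. W $ i $ k * X k)"
    unfolding step by (intro tendsto_sum tendsto_mult_left assms)
  ultimately show ?thesis
    by (rule LIMSEQ_unique)
qed

definition harmonic_outside :: "real^'n^'n \<Rightarrow> 'n set \<Rightarrow> ('n \<Rightarrow> real) \<Rightarrow> bool" where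
  "harmonic_outside P S h \<longleftrightarrow> (\<forall>i. i \<notin> S \<longrightarrow> h i = (\<Sum>k\<in>UNIV. P $ i $ k * h k))"

lemma harmonic_outside_diff:
  assumes "harmonic_outside P S h" "harmonic_outside P S g"
  shows "harmonic_outside P S (\<lambda>k. h k - g k)"
  using assms by (simp add: harmonic_outside_def right_diff_distrib sum_subtractf)

text \<open>Maximum principle: a maximum of h attained outside S propagates along the edges of
  the graph of P, so by irreducibility it reaches S.\<close>
lemma harmonic_outside_le_0:
  assumes rs: "row_stochastic P" and irr: "irreducible_mat P" and "S \<noteq> {}"
    and zero: "\<forall>k\<in>S. h k = 0" and harm: "harmonic_outside P S h"
  shows "h i \<le> 0"
proof (rule ccontr)
  assume "\<not> h i \<le> 0"
  define m where "m = Max (range h)"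
  have le_m: "h k \<le> m" for k
    by (simp add: m_def)
  obtain i0 where i0: "h i0 = m"
    unfolding m_def by (metis Max_in UNIV_not_empty finite finite_imageI image_iff image_is_empty)
  have "m > 0"
    using le_m[of i] \<open>\<not> h i \<le> 0\<close> by linarith
  have edge: "h j = m" if "h a = m" "P $ a $ j > 0" for a j
  proof -
    have "a \<notin> S"
      using zero that(1) \<open>m > 0\<close> by auto
    then have "h a = (\<Sum>k\<in>UNIV. P $ a $ k * h k)"
      using harm by (simp add: harmonic_outside_def)
    then have "(\<Sum>k\<in>UNIV. P $ a $ k * (m - h k)) = 0"
      using rs that(1)
      by (simp add: row_stochastic_def right_diff_distrib sum_subtractf sum_distrib_right[symmetric])
    moreover have "\<forall>k\<in>UNIV. P $ a $ k * (m - h k) \<ge> 0"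
      using rs le_m by (simp add: row_stochastic_def)
    ultimately have "P $ a $ j * (m - h j) = 0"
      using sum_nonneg_eq_0_iff[of UNIV "\<lambda>k. P $ a $ k * (m - h k)"] by simp
    then show ?thesis
      using that(2) by simp
  qed
  have path: "h y = m" if "(x, y) \<in> (graph_edges P)\<^sup>+" "h x = m" for x y
    using that by (induction rule: trancl_induct) (use edge in \<open>auto simp: graph_edges_def\<close>)
  obtain s where "s \<in> S"
    using \<open>S \<noteq> {}\<close> by blast
  then have "h s = m"
    using path[of i0 s] irr i0 by (simp add: irreducible_mat_def)
  then show False
    using zero \<open>s \<in> S\<close> \<open>m > 0\<close> by simp
qed

lemma harmonic_outside_eq_0:
  assumes rs: "row_stochastic P" and irr: "irreducible_mat P" and ne: "S \<noteq> {}"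
    and zero: "\<forall>k\<in>S. h k = 0" and harm: "harmonic_outside P S h"
  shows "h i = 0"
proof -
  have "harmonic_outside P S (\<lambda>k. 0 - h k)"
    using harm by (intro harmonic_outside_diff) (simp_all add: harmonic_outside_def)
  then have "0 - h i \<le> 0"
    using zero by (intro harmonic_outside_le_0[OF rs irr ne]) simp_all
  moreover have "h i \<le> 0"
    using harmonic_outside_le_0[OF rs irr ne zero harm] .
  ultimately show ?thesis
    by simp
qed

lemma Wm_nth: "Wm P z $ i $ k = (1 - z $ i) * P $ i $ k + (if i = k then z $ i else 0)"
proof -
  have "(\<Sum>l\<in>UNIV. ((if i = l then 1 else 0) - (if i = l then z $ i else 0)) * P $ l $ k)
      = (\<Sum>l\<in>UNIV. if l = i then (1 - z $ i) * P $ i $ k else 0)"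
    by (rule sum.cong) auto
  then show ?thesis
    by (simp add: Wm_def diagm_def matrix_matrix_mult_def mat_def)
qed

lemma row_stochastic_Wm:
  assumes "z \<in> profiles" "row_stochastic P"
  shows "row_stochastic (Wm P z)"
proof -
  have "(\<Sum>k\<in>UNIV. Wm P z $ i $ k) = (1 - z $ i) * (\<Sum>k\<in>UNIV. P $ i $ k) + z $ i" for i
    by (simp add: Wm_nth sum.distrib sum_distrib_left)
  then show ?thesis
    using assms by (simp add: row_stochastic_def profiles_def Wm_nth)
qed

lemma absorbing_Wm: "i \<in> stubborn z \<Longrightarrow> absorbing (Wm P z) i"
  by (simp add: absorbing_def Wm_nth stubborn_def)

lemma harmonic_outside_Wm:
  assumes "z \<in> profiles" "harmonic_outside (Wm P z) S h"
  shows "harmonic_outside P (S \<union> stubborn z) h"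
  unfolding harmonic_outside_def
proof (intro allI impI)
  fix i
  assume i: "i \<notin> S \<union> stubborn z"
  have "z $ i \<le> 1"
    using assms(1) by (simp add: profiles_def)
  moreover have "z $ i \<noteq> 1"
    using i by (simp add: stubborn_def)
  ultimately have "z $ i < 1"
    by simp
  have "(\<Sum>k\<in>UNIV. Wm P z $ i $ k * h k)
      = (\<Sum>k\<in>UNIV. (1 - z $ i) * (P $ i $ k * h k) + (if k = i then z $ i * h i else 0))"
    by (rule sum.cong) (auto simp: Wm_nth distrib_right)
  also have "\<dots> = (1 - z $ i) * (\<Sum>k\<in>UNIV. P $ i $ k * h k) + z $ i * h i"
    by (simp add: sum.distrib sum_distrib_left)
  finally have "(1 - z $ i) * h i = (1 - z $ i) * (\<Sum>k\<in>UNIV. P $ i $ k * h k)"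
    using i assms(2) by (simp add: harmonic_outside_def left_diff_distrib)
  then show "h i = (\<Sum>k\<in>UNIV. P $ i $ k * h k)"
    using \<open>z $ i < 1\<close> by simp
qed

lemma row_stochastic_matpow_Wm:
  "z \<in> profiles \<Longrightarrow> row_stochastic P \<Longrightarrow> row_stochastic (matpow (Wm P z) t)"
  by (intro row_stochastic_matpow row_stochastic_Wm)

lemma matpow_Wm_stubborn_column_convergent:
  "z \<in> profiles \<Longrightarrow> row_stochastic P \<Longrightarrow> j \<in> stubborn z
    \<Longrightarrow> convergent (\<lambda>t. matpow (Wm P z) t $ i $ j)"
  by (intro matpow_absorbing_column_convergent row_stochastic_Wm absorbing_Wm)

context
  fixes P :: "real^'n^'n" and z :: "real^'n"
  assumes rs: "row_stochastic P" and irr: "irreducible_mat P"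
    and zp: "z \<in> profiles" and ne: "stubborn z \<noteq> {}"
begin

text \<open>The mass outside the stubborn set converges because the stubborn columns do, and its
  limit is harmonic off the stubborn set and vanishes on it; the maximum principle makes it
  vanish.\<close>
lemma matpow_Wm_mass_outside_stubborn_tendsto_0:
  "(\<lambda>t. \<Sum>j\<in>-stubborn z. matpow (Wm P z) t $ i $ j) \<longlonglongrightarrow> 0"
proof -
  define S where "S = stubborn z"
  define M where "M = matpow (Wm P z)"
  define L where "L i = 1 - (\<Sum>j\<in>S. lim (\<lambda>t. M t $ i $ j))" for i
  have mass_outside: "(\<Sum>j\<in>-S. M t $ i $ j) = 1 - (\<Sum>j\<in>S. M t $ i $ j)" for t i
    using sum.subset_diff[of S UNIV "\<lambda>j. M t $ i $ j"] row_stochastic_matpow_Wm[OF zp rs]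
    by (simp add: M_def row_stochastic_def Compl_eq_Diff_UNIV)
  have "(\<lambda>t. M t $ i $ j) \<longlonglongrightarrow> lim (\<lambda>t. M t $ i $ j)" if "j \<in> S" for i j
    using matpow_Wm_stubborn_column_convergent[OF zp rs] that
    by (simp add: M_def S_def convergent_LIMSEQ_iff)
  then have L_limit: "(\<lambda>t. \<Sum>j\<in>-S. M t $ i $ j) \<longlonglongrightarrow> L i" for i
    unfolding mass_outside L_def by (intro tendsto_intros)
  have "L k = 0" if "k \<in> S" for k
  proof -
    have "M t $ k $ j = 0" if "j \<in> -S" for t j
      using absorbing_matpow[OF absorbing_Wm[of k z P], of t] \<open>k \<in> S\<close> that
      unfolding M_def S_def absorbing_def by auto
    then have "(\<lambda>t. \<Sum>j\<in>-S. M t $ k $ j) \<longlonglongrightarrow> 0"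
      by simp
    then show ?thesis
      using LIMSEQ_unique[OF L_limit] by blast
  qed
  moreover have "harmonic_outside P S L"
  proof -
    have "harmonic_outside (Wm P z) {} L"
      unfolding harmonic_outside_def
      using matpow_partial_row_sum_limit_fixed[OF L_limit[unfolded M_def]] by blast
    from harmonic_outside_Wm[OF zp this] show ?thesis
      by (simp add: S_def)
  qed
  ultimately have "L i = 0"
    by (intro harmonic_outside_eq_0[OF rs irr ne[folded S_def]]) auto
  then show ?thesis
    using L_limit[of i] unfolding M_def S_def by simp
qed

lemma matpow_Wm_column_tendsto_0:
  assumes "j \<notin> stubborn z"
  shows "(\<lambda>t. matpow (Wm P z) t $ i $ j) \<longlonglongrightarrow> 0"
proof (rule real_tendsto_sandwich)
  show "\<forall>\<^sub>F t in sequentially. 0 \<le> matpow (Wm P z) t $ i $ j"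
    using row_stochastic_matpow_Wm[OF zp rs] by (simp add: row_stochastic_def)
  have "matpow (Wm P z) t $ i $ j \<le> (\<Sum>l\<in>-stubborn z. matpow (Wm P z) t $ i $ l)" for t
    using row_stochastic_matpow_Wm[OF zp rs] assms
    by (intro member_le_sum) (auto simp: row_stochastic_def)
  then show "\<forall>\<^sub>F t in sequentially.
      matpow (Wm P z) t $ i $ j \<le> (\<Sum>l\<in>-stubborn z. matpow (Wm P z) t $ i $ l)"
    by (intro always_eventually allI)
qed (simp_all add: matpow_Wm_mass_outside_stubborn_tendsto_0)

lemma matpow_Wm_tendsto_Hm: "(\<lambda>t. matpow (Wm P z) t) \<longlonglongrightarrow> Hm P z"
proof -
  have "convergent (\<lambda>t. matpow (Wm P z) t $ i $ j)" for i j
    using matpow_Wm_stubborn_column_convergent[OF zp rs] matpow_Wm_column_tendsto_0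
    by (cases "j \<in> stubborn z") (meson convergentI)+
  then have "(\<lambda>t. matpow (Wm P z) t) \<longlonglongrightarrow> (\<chi> i j. lim (\<lambda>t. matpow (Wm P z) t $ i $ j))"
    by (intro vec_tendstoI) (simp add: convergent_LIMSEQ_iff)
  then show ?thesis
    by (metis Hm_def limI)
qed

lemma matpow_Wm_nth_tendsto_Hm: "(\<lambda>t. matpow (Wm P z) t $ i $ j) \<longlonglongrightarrow> Hm P z $ i $ j"
  by (intro tendsto_vec_nth matpow_Wm_tendsto_Hm)

lemma row_stochastic_Hm: "row_stochastic (Hm P z)"
proof -
  have "Hm P z $ i $ j \<ge> 0" for i j
    using row_stochastic_matpow_Wm[OF zp rs]
    by (intro LIMSEQ_le_const[OF matpow_Wm_nth_tendsto_Hm]) (simp add: row_stochastic_def)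
  moreover have "(\<Sum>j\<in>UNIV. Hm P z $ i $ j) = 1" for i
  proof (rule LIMSEQ_unique)
    show "(\<lambda>t. \<Sum>j\<in>UNIV. matpow (Wm P z) t $ i $ j) \<longlonglongrightarrow> (\<Sum>j\<in>UNIV. Hm P z $ i $ j)"
      by (intro tendsto_sum matpow_Wm_nth_tendsto_Hm)
    show "(\<lambda>t. \<Sum>j\<in>UNIV. matpow (Wm P z) t $ i $ j) \<longlonglongrightarrow> 1"
      using row_stochastic_matpow_Wm[OF zp rs] by (simp add: row_stochastic_def)
  qed
  ultimately show ?thesis
    by (simp add: row_stochastic_def)
qed

lemma Hm_nth_eq_0_outside_stubborn: "j \<notin> stubborn z \<Longrightarrow> Hm P z $ i $ j = 0"
  using LIMSEQ_unique matpow_Wm_nth_tendsto_Hm matpow_Wm_column_tendsto_0 by blast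

lemma absorbing_Hm:
  assumes "i \<in> stubborn z"
  shows "absorbing (Hm P z) i"
proof -
  have "(\<lambda>t. matpow (Wm P z) t $ i $ k) \<longlonglongrightarrow> (if i = k then 1 else 0)" for k
    using absorbing_matpow[OF absorbing_Wm[OF assms]] by (simp add: absorbing_def)
  then show ?thesis
    using LIMSEQ_unique[OF matpow_Wm_nth_tendsto_Hm] by (simp add: absorbing_def)
qed

lemma harmonic_outside_Hm_column: "harmonic_outside P (stubborn z) (\<lambda>k. Hm P z $ k $ j)"
proof -
  have column: "(\<lambda>t. \<Sum>l\<in>{j}. matpow (Wm P z) t $ i $ l) \<longlonglongrightarrow> Hm P z $ i $ j" for i
    using matpow_Wm_nth_tendsto_Hm by simp
  have "harmonic_outside (Wm P z) {} (\<lambda>k. Hm P z $ k $ j)"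
    using matpow_partial_row_sum_limit_fixed[OF column] unfolding harmonic_outside_def by blast
  from harmonic_outside_Wm[OF zp this] show ?thesis
    by simp
qed

end

lemma Hm_eq_if_stubborn_eq:
  assumes rs: "row_stochastic P" and irr: "irreducible_mat P"
    and zp: "z \<in> profiles" and zp': "z' \<in> profiles"
    and eq: "stubborn z' = stubborn z" and ne: "stubborn z \<noteq> {}"
  shows "Hm P z' = Hm P z"
proof -
  note ne' = ne[folded eq]
  have "Hm P z' $ k $ j - Hm P z $ k $ j = 0" for k j
  proof (rule harmonic_outside_eq_0[OF rs irr ne, where h="\<lambda>k. Hm P z' $ k $ j - Hm P z $ k $ j"])
    show "\<forall>k\<in>stubborn z. Hm P z' $ k $ j - Hm P z $ k $ j = 0"
      using absorbing_Hm[OF rs irr zp ne] absorbing_Hm[OF rs irr zp' ne'] eq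
      by (simp add: absorbing_def)
    show "harmonic_outside P (stubborn z) (\<lambda>k. Hm P z' $ k $ j - Hm P z $ k $ j)"
      using harmonic_outside_Hm_column[OF rs irr zp' ne'] harmonic_outside_Hm_column[OF rs irr zp ne] eq
      by (intro harmonic_outside_diff) simp_all
  qed
  then show ?thesis
    by (simp add: vec_eq_iff)
qed

lemma Hm_stubborn_singleton:
  assumes rs: "row_stochastic P" and irr: "irreducible_mat P"
    and zp: "z \<in> profiles" and w: "stubborn z = {w}"
  shows "Hm P z $ i $ j = (if j = w then 1 else 0)"
proof -
  have off: "Hm P z $ i $ j = 0" if "j \<noteq> w" for j
    using Hm_nth_eq_0_outside_stubborn[OF rs irr zp] w that by simp
  have "(\<Sum>j\<in>UNIV. Hm P z $ i $ j) = (\<Sum>j\<in>UNIV. if j = w then Hm P z $ i $ w else 0)"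
    by (rule sum.cong) (simp_all add: off)
  then have "Hm P z $ i $ w = 1"
    using row_stochastic_Hm[OF rs irr zp] w by (simp add: row_stochastic_def)
  then show ?thesis
    using off by simp
qed

lemma cost_absorbing: "absorbing (Hm P z) i \<Longrightarrow> cost P sigma2 i z = sigma2 i"
proof -
  assume "absorbing (Hm P z) i"
  then have "cost P sigma2 i z = (\<Sum>j\<in>UNIV. if j = i then sigma2 i else 0)"
    unfolding cost_def by (intro sum.cong) (auto simp: absorbing_def)
  then show ?thesis
    by simp
qed

lemma cost_stubborn_singleton:
  assumes "row_stochastic P" "irreducible_mat P" "z \<in> profiles" "stubborn z = {w}"
  shows "cost P sigma2 i z = sigma2 w"
proof -
  have "cost P sigma2 i z = (\<Sum>j\<in>UNIV. if j = w then sigma2 w else 0)"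
    unfolding cost_def by (intro sum.cong) (simp_all add: Hm_stubborn_singleton[OF assms])
  then show ?thesis
    by simp
qed

lemma cost_le_if_stubborn_le:
  assumes rs: "row_stochastic P" and irr: "irreducible_mat P"
    and zp: "z \<in> profiles" and ne: "stubborn z \<noteq> {}"
    and bound: "\<forall>j\<in>stubborn z. 0 \<le> sigma2 j \<and> sigma2 j \<le> c"
  shows "cost P sigma2 i z \<le> c"
proof -
  have H: "0 \<le> Hm P z $ i $ j" "Hm P z $ i $ j \<le> 1" for j
    using row_stochastic_Hm[OF rs irr zp ne] row_stochastic_nth_le_1
    by (auto simp: row_stochastic_def)
  have "(Hm P z $ i $ j)\<^sup>2 * sigma2 j \<le> Hm P z $ i $ j * c" for j
  proof (cases "j \<in> stubborn z")
    case True
    then have "(Hm P z $ i $ j)\<^sup>2 * sigma2 j \<le> Hm P z $ i $ j * sigma2 j"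
      using H[of j] bound by (simp add: power2_eq_square mult_right_mono mult_left_le_one_le)
    also have "\<dots> \<le> Hm P z $ i $ j * c"
      using H[of j] bound True by (simp add: mult_left_mono)
    finally show ?thesis .
  next
    case False
    then show ?thesis
      using Hm_nth_eq_0_outside_stubborn[OF rs irr zp ne] by simp
  qed
  then have "cost P sigma2 i z \<le> (\<Sum>j\<in>UNIV. Hm P z $ i $ j) * c"
    unfolding cost_def sum_distrib_right by (rule sum_mono)
  then show ?thesis
    using row_stochastic_Hm[OF rs irr zp ne] by (simp add: row_stochastic_def)
qed

lemma stubborn_vupd:
  "stubborn (vupd z i b) = (if b = 1 then insert i (stubborn z) else stubborn z - {i})"
  by (auto simp: stubborn_def vupd_def)

lemma vupd_in_profiles: "z \<in> profiles \<Longrightarrow> b \<in> {0..1} \<Longrightarrow> vupd z i b \<in> profiles"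
  by (auto simp: profiles_def vupd_def)

lemma vupd_nth_self: "vupd z i (z $ i) = z"
  by (simp add: vupd_def vec_eq_iff)

text \<open>A deviating member of a two-element stubborn set leaves the other one as the
  sole stubborn agent, whose opinion then becomes the consensus.\<close>
lemma cost_vupd_eq_if_stubborn:
  assumes rs: "row_stochastic P" and irr: "irreducible_mat P" and zp: "z \<in> profiles"
    and two: "card (stubborn z) = 2" and i: "i \<in> stubborn z" and b: "b \<in> {0..1}"
    and const: "\<forall>j\<in>stubborn z. sigma2 j = sigma2 i"
  shows "cost P sigma2 i (vupd z i b) = cost P sigma2 i z"
proof (cases "b = 1")
  case True
  then show ?thesis
    using i vupd_nth_self[of z i] by (simp add: stubborn_def)
next
  case False
  then have "card (stubborn (vupd z i b)) = 1"
    using two i by (simp add: stubborn_vupd)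
  then obtain w where w: "stubborn (vupd z i b) = {w}"
    by (rule card_1_singletonE)
  then have "w \<in> stubborn z"
    using False by (auto simp: stubborn_vupd)
  have "cost P sigma2 i (vupd z i b) = sigma2 w"
    by (rule cost_stubborn_singleton[OF rs irr vupd_in_profiles[OF zp b] w])
  also have "\<dots> = sigma2 i"
    using const \<open>w \<in> stubborn z\<close> by simp
  also have "\<dots> = cost P sigma2 i z"
    using i by (intro cost_absorbing[symmetric] absorbing_Hm[OF rs irr zp]) auto
  finally show ?thesis .
qed

lemma cost_le_cost_vupd_if_not_stubborn:
  assumes rs: "row_stochastic P" and irr: "irreducible_mat P" and zp: "z \<in> profiles"
    and ne: "stubborn z \<noteq> {}" and i: "i \<notin> stubborn z" and b: "b \<in> {0..1}"
    and bound: "\<forall>j\<in>stubborn z. 0 \<le> sigma2 j \<and> sigma2 j \<le> sigma2 i"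
  shows "cost P sigma2 i z \<le> cost P sigma2 i (vupd z i b)"
proof (cases "b = 1")
  case True
  then have "i \<in> stubborn (vupd z i b)"
    by (simp add: stubborn_vupd)
  then have "cost P sigma2 i (vupd z i b) = sigma2 i"
    by (intro cost_absorbing absorbing_Hm[OF rs irr vupd_in_profiles[OF zp b]]) auto
  then show ?thesis
    using cost_le_if_stubborn_le[OF rs irr zp ne bound] by simp
next
  case False
  then have "stubborn (vupd z i b) = stubborn z"
    using i by (auto simp: stubborn_vupd)
  then show ?thesis
    using Hm_eq_if_stubborn_eq[OF rs irr zp vupd_in_profiles[OF zp b] _ ne]
    by (simp add: cost_def)
qed

theorem proposition6:
  fixes P :: "real^'n^'n" and sigma2 :: "'n \<Rightarrow> real" and z :: "real^'n"
  assumes "CARD('n) \<ge> 2"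
    and "row_stochastic P" and "irreducible_mat P" and "aperiodic_mat P"
    and "\<forall>i. sigma2 i > 0"
    and "z \<in> profiles"
    and "card (stubborn z) = 2"
    and "\<forall>j\<in>stubborn z. \<forall>i. sigma2 j \<le> sigma2 i"
  shows "nash_eq P sigma2 z \<and> \<not> strict_nash_eq P sigma2 z"
proof -
  note rs = assms(2) and irr = assms(3) and zp = assms(6) and two = assms(7)
    and sigma_min = assms(8)
  have ne: "stubborn z \<noteq> {}"
    using two by auto
  then obtain a where a: "a \<in> stubborn z"
    by blast
  have const: "\<forall>j\<in>stubborn z. sigma2 j = sigma2 i" if "i \<in> stubborn z" for i
    using sigma_min that by (meson order_antisym)
  have bound: "\<forall>j\<in>stubborn z. 0 \<le> sigma2 j \<and> sigma2 j \<le> sigma2 i" for i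
    using sigma_min assms(5) by (simp add: less_imp_le)
  have "cost P sigma2 i z \<le> cost P sigma2 i (vupd z i b)" if "b \<in> {0..1}" for i b
    using cost_vupd_eq_if_stubborn[OF rs irr zp two _ that const]
      cost_le_cost_vupd_if_not_stubborn[OF rs irr zp ne _ that bound]
    by (cases "i \<in> stubborn z") auto
  then have "nash_eq P sigma2 z"
    using zp by (simp add: nash_eq_def)
  moreover have "\<not> strict_nash_eq P sigma2 z"
  proof
    assume "strict_nash_eq P sigma2 z"
    then have "cost P sigma2 a z < cost P sigma2 a (vupd z a 0)"
      using a by (simp add: strict_nash_eq_def stubborn_def)
    then show False
      using cost_vupd_eq_if_stubborn[OF rs irr zp two a _ const[OF a]] by simp
  qed
  ultimately show ?thesis
    by blast
qed

end
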